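(* Let $G$ be a graph, $X_C \subseteq V(G)$, $z \geq 0$, and let $H$ be an $X_C$-certificate of order $z$ in $G$. Then $H$ contains a subgraph $\hat{H}$ that is an $X_C$-certificate of order $z$ in $G$ such that $\hat{H} - X_C$ has at most $z^2 |X_C|$ connected components.
   Context: $\mathrm{oct}(H)$ denotes the minimum size of a set $S\subseteq V(H)$ with $H - S$ bipartite. For $X_C \subseteq V(G)$, an $X_C$-certificate of order $z$ is a subgraph $H$ of $G$ such that $H - X_C$ is bipartite, $\mathrm{oct}(H)=|X_C|$, and each connected component $H'$ of $H$ has $|X_C\cap V(H')|\le z$. *)

theory Defs
  imports Main
begin

record 'a graph =
  verts :: "'a set"
  edges :: "'a set set"

definition wf_graph :: "'a graph \<Rightarrow> bool" where
  "wf_graph G \<longleftrightarrow> finite (verts G) \<and>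
     (\<forall>e\<in>edges G. card e = 2 \<and> e \<subseteq> verts G)"

definition subgraph :: "'a graph \<Rightarrow> 'a graph \<Rightarrow> bool" where
  "subgraph H G \<longleftrightarrow> wf_graph H \<and> verts H \<subseteq> verts G \<and> edges H \<subseteq> edges G"

definition del_verts :: "'a graph \<Rightarrow> 'a set \<Rightarrow> 'a graph" where
  "del_verts H S = \<lparr> verts = verts H - S, edges = {e \<in> edges H. e \<inter> S = {}} \<rparr>"

definition bipartite :: "'a graph \<Rightarrow> bool" where
  "bipartite H \<longleftrightarrow> (\<exists>A \<subseteq> verts H. \<forall>e\<in>edges H. card (e \<inter> A) = 1)"

definition oct :: "'a graph \<Rightarrow> nat" where
  "oct H = (LEAST k. \<exists>S. S \<subseteq> verts H \<and> bipartite (del_verts H S) \<and> card S = k)"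

definition adj :: "'a graph \<Rightarrow> 'a \<Rightarrow> 'a \<Rightarrow> bool" where
  "adj H u v \<longleftrightarrow> {u, v} \<in> edges H"

definition reachable :: "'a graph \<Rightarrow> 'a \<Rightarrow> 'a \<Rightarrow> bool" where
  "reachable H u v \<longleftrightarrow> u \<in> verts H \<and> (adj H)\<^sup>*\<^sup>* u v"

definition components :: "'a graph \<Rightarrow> 'a set set" where
  "components H = {{v. reachable H u v} | u. u \<in> verts H}"

definition induced :: "'a graph \<Rightarrow> 'a set \<Rightarrow> 'a graph" where
  "induced H C = \<lparr> verts = C, edges = {e \<in> edges H. e \<subseteq> C} \<rparr>"

definition certificate :: "'a graph \<Rightarrow> 'a set \<Rightarrow> nat \<Rightarrow> 'a graph \<Rightarrow> bool" where
  "certificate G XC z H \<longleftrightarrow>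
     subgraph H G \<and> bipartite (del_verts H XC) \<and> oct H = card XC \<and>
     (\<forall>C\<in>components H. card (XC \<inter> C) \<le> z)"

end

theory Submission
  imports Defs
begin

text \<open>Fix a proper 2-colouring B of H - X_C. A component D of H - X_C links two terminals
  x, x' with a parity: that of the x-x' walks through D. For every pair of terminals in a common
  component of H and every parity keep z components realising that link (all of them if there
  are fewer), and delete the other components of H - X_C; since a component of H contains at
  most z terminals, at most z^2 |X_C| components remain.

  Suppose the result had an odd cycle transversal S with |S| < |X_C|. Replace S by X_C on
  the components K of H with |S \<inter> K| \<ge> |X_C \<inter> K|. On every other component, S misses one of
  the z kept components realising each link, and that component forces the parity of the link
  on the colouring of the kept graph; hence each deleted component is attached consistently and
  its colouring by B, possibly flipped, extends the colouring. This yields an odd cycle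
  transversal of H smaller than oct H = |X_C|.\<close>

lemma wf_graph_del_verts: "wf_graph H \<Longrightarrow> wf_graph (del_verts H S)"
  unfolding wf_graph_def del_verts_def by auto

lemma verts_del_verts [simp]: "verts (del_verts H S) = verts H - S"
  unfolding del_verts_def by simp

lemma edges_del_verts [simp]: "edges (del_verts H S) = {e \<in> edges H. e \<inter> S = {}}"
  unfolding del_verts_def by simp

lemma del_verts_del_verts: "del_verts (del_verts H S) T = del_verts H (S \<union> T)"
  unfolding del_verts_def by auto

lemma del_verts_commute: "del_verts (del_verts H S) T = del_verts (del_verts H T) S"
  unfolding del_verts_del_verts by (simp add: Un_commute)

lemma del_verts_Int_verts:
  assumes "wf_graph H"
  shows "del_verts H (S \<inter> verts H) = del_verts H S"
  using assms unfolding del_verts_def wf_graph_def by auto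

lemma wf_graph_finite: "wf_graph H \<Longrightarrow> finite (verts H)"
  unfolding wf_graph_def by simp

lemma edge_endpoints:
  assumes "wf_graph H" "{a, b} \<in> edges H"
  shows "a \<in> verts H" "b \<in> verts H" "a \<noteq> b"
  using assms unfolding wf_graph_def by (auto simp: card_2_iff)

subsection \<open>Proper 2-colourings\<close>

definition proper_colouring :: "'a graph \<Rightarrow> 'a set \<Rightarrow> bool" where
  "proper_colouring H A \<longleftrightarrow> (\<forall>a b. {a, b} \<in> edges H \<longrightarrow> (a \<in> A) \<noteq> (b \<in> A))"

lemma proper_colouringD:
  "proper_colouring H A \<Longrightarrow> {a, b} \<in> edges H \<Longrightarrow> (a \<in> A) \<noteq> (b \<in> A)"
  unfolding proper_colouring_def by blast

lemma proper_colouring_del_verts_mono: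
  "proper_colouring (del_verts H S) A \<Longrightarrow> S \<subseteq> T \<Longrightarrow> proper_colouring (del_verts H T) A"
  unfolding proper_colouring_def by auto

lemma bipartite_iff_proper_colouring:
  assumes "wf_graph H"
  shows "bipartite H \<longleftrightarrow> (\<exists>A. proper_colouring H A)"
proof
  assume "bipartite H"
  then obtain A where A: "\<forall>e\<in>edges H. card (e \<inter> A) = 1"
    unfolding bipartite_def by blast
  have "(a \<in> A) \<noteq> (b \<in> A)" if "{a, b} \<in> edges H" for a b
    using A that edge_endpoints(3)[OF assms that]
    by (cases "a \<in> A"; cases "b \<in> A") auto
  then show "\<exists>A. proper_colouring H A"
    unfolding proper_colouring_def by blast
next
  assume "\<exists>A. proper_colouring H A"
  then obtain A where A: "proper_colouring H A" ..
  have "card (e \<inter> (A \<inter> verts H)) = 1" if "e \<in> edges H" for e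
  proof -
    have "card e = 2" using assms that unfolding wf_graph_def by blast
    then obtain a b where e: "e = {a, b}" by (auto simp: card_2_iff)
    have ab: "a \<in> verts H" "b \<in> verts H" "(a \<in> A) \<noteq> (b \<in> A)"
      using edge_endpoints[OF assms] proper_colouringD[OF A] that unfolding e by blast+
    then have "e \<inter> (A \<inter> verts H) = (if a \<in> A then {a} else {b})"
      unfolding e by auto
    then show ?thesis by simp
  qed
  then show "bipartite H"
    unfolding bipartite_def by (intro exI[of _ "A \<inter> verts H"]) auto
qed

lemma bipartite_del_verts_iff:
  "wf_graph H \<Longrightarrow> bipartite (del_verts H S) \<longleftrightarrow> (\<exists>A. proper_colouring (del_verts H S) A)"
  by (rule bipartite_iff_proper_colouring[OF wf_graph_del_verts])

lemma proper_colouring_merge: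
  assumes "\<And>a b. {a, b} \<in> edges H \<Longrightarrow> a \<in> P \<longleftrightarrow> b \<in> P"
    and "proper_colouring (del_verts H (S1 \<union> - P)) A1"
    and "proper_colouring (del_verts H (S2 \<union> P)) A2"
  shows "proper_colouring (del_verts H ((S1 \<inter> P) \<union> (S2 - P))) ((A1 \<inter> P) \<union> (A2 - P))"
  unfolding proper_colouring_def
proof (intro allI impI)
  fix a b assume ab: "{a, b} \<in> edges (del_verts H ((S1 \<inter> P) \<union> (S2 - P)))"
  then have e: "{a, b} \<in> edges H" "a \<in> P \<longleftrightarrow> b \<in> P" using assms(1) by auto
  show "(a \<in> A1 \<inter> P \<union> (A2 - P)) \<noteq> (b \<in> A1 \<inter> P \<union> (A2 - P))"
  proof (cases "a \<in> P")
    case True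
    with ab e have "{a, b} \<in> edges (del_verts H (S1 \<union> - P))" by auto
    with True e show ?thesis using proper_colouringD[OF assms(2)] by blast
  next
    case False
    with ab e have "{a, b} \<in> edges (del_verts H (S2 \<union> P))" by auto
    with False e show ?thesis using proper_colouringD[OF assms(3)] by blast
  qed
qed

lemma oct_le:
  assumes "finite S" "S \<subseteq> verts H" "bipartite (del_verts H S)"
  shows "oct H \<le> card S"
  unfolding oct_def by (rule Least_le) (use assms in blast)

lemma obtain_oct_set:
  assumes "wf_graph H"
  obtains S where "S \<subseteq> verts H" "bipartite (del_verts H S)" "card S = oct H"
proof -
  have "e \<inter> verts H \<noteq> {}" if "e \<in> edges H" for e
  proof -
    have "card e = 2" "e \<subseteq> verts H" using assms that unfolding wf_graph_def by auto
    then show ?thesis by (auto simp: Int_absorb2)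
  qed
  then have "edges (del_verts H (verts H)) = {}" by auto
  then have "bipartite (del_verts H (verts H))"
    unfolding bipartite_def by (intro exI[of _ "{}"]) simp
  then have "\<exists>S. S \<subseteq> verts H \<and> bipartite (del_verts H S) \<and> card S = oct H"
    unfolding oct_def
    by (intro LeastI_ex[where P = "\<lambda>k. \<exists>S. S \<subseteq> verts H \<and> bipartite (del_verts H S) \<and> card S = k"])
      blast
  then show thesis using that by blast
qed

lemma oct_set_subset_verts:
  assumes "wf_graph H" "finite X" "bipartite (del_verts H X)" "oct H = card X"
  shows "X \<subseteq> verts H"
proof -
  have "finite (X \<inter> verts H)" using assms(2) by simp
  moreover have "bipartite (del_verts H (X \<inter> verts H))"
    using assms(3) del_verts_Int_verts[OF assms(1)] by simp
  ultimately have "card X \<le> card (X \<inter> verts H)"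
    using oct_le[of "X \<inter> verts H" H] assms(4) by simp
  then have "X \<inter> verts H = X"
    using card_subset_eq[OF assms(2), of "X \<inter> verts H"] card_mono[OF assms(2), of "X \<inter> verts H"]
    by simp
  then show ?thesis by blast
qed

subsection \<open>Connected components\<close>

lemma adj_sym: "adj H a b \<Longrightarrow> adj H b a"
  unfolding adj_def by (simp add: insert_commute)

lemma reachable_refl: "a \<in> verts H \<Longrightarrow> reachable H a a"
  unfolding reachable_def by simp

lemma reachable_trans: "reachable H a b \<Longrightarrow> reachable H b c \<Longrightarrow> reachable H a c"
  unfolding reachable_def by auto

lemma reachable_in_verts:
  assumes "wf_graph H" "reachable H a b"
  shows "b \<in> verts H"
proof -
  have "(adj H)\<^sup>*\<^sup>* a b" "a \<in> verts H" using assms(2) unfolding reachable_def by auto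
  then show ?thesis
  proof induction
    case (step y z)
    then show ?case using edge_endpoints(2)[OF assms(1)] by (simp add: adj_def)
  qed
qed

lemma reachable_sym:
  assumes "wf_graph H" "reachable H a b"
  shows "reachable H b a"
proof -
  have "(adj H)\<^sup>*\<^sup>* a b" using assms(2) unfolding reachable_def by simp
  then have "(adj H)\<^sup>*\<^sup>* b a"
    by induction (auto intro: converse_rtranclp_into_rtranclp adj_sym)
  then show ?thesis
    using reachable_in_verts[OF assms] unfolding reachable_def by simp
qed

lemma reachable_edge: "wf_graph H \<Longrightarrow> {a, b} \<in> edges H \<Longrightarrow> reachable H a b"
  unfolding reachable_def adj_def by (auto dest: edge_endpoints)

lemma reachable_mono:
  assumes "reachable H a b" "verts H \<subseteq> verts H'" "edges H \<subseteq> edges H'"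
  shows "reachable H' a b"
proof -
  have "(adj H)\<^sup>*\<^sup>* a b" "a \<in> verts H" using assms(1) unfolding reachable_def by auto
  moreover have "(adj H)\<^sup>*\<^sup>* \<le> (adj H')\<^sup>*\<^sup>*"
    using assms(3) by (intro rtranclp_mono) (auto simp: adj_def)
  ultimately show ?thesis using assms(2) unfolding reachable_def by auto
qed

lemma proper_colourings_reachable:
  assumes "proper_colouring H A" "proper_colouring H B" "reachable H u w"
  shows "((w \<in> A) = (w \<in> B)) = ((u \<in> A) = (u \<in> B))"
proof -
  have "(adj H)\<^sup>*\<^sup>* u w" using assms(3) unfolding reachable_def by simp
  then show ?thesis
    by induction (auto simp: adj_def dest: proper_colouringD[OF assms(1)] proper_colouringD[OF assms(2)])
qed

definition component_of :: "'a graph \<Rightarrow> 'a \<Rightarrow> 'a set" where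
  "component_of H u = {v. reachable H u v}"

lemma components_eq_image: "components H = component_of H ` verts H"
  unfolding components_def component_of_def by auto

lemma component_of_self: "a \<in> verts H \<Longrightarrow> a \<in> component_of H a"
  by (simp add: component_of_def reachable_refl)

lemma component_of_subset: "wf_graph H \<Longrightarrow> component_of H a \<subseteq> verts H"
  by (auto simp: component_of_def dest: reachable_in_verts)

lemma component_of_eq:
  assumes "wf_graph H" "reachable H a b"
  shows "component_of H a = component_of H b"
  using assms reachable_sym[OF assms] unfolding component_of_def
  by (auto intro: reachable_trans)

lemma component_of_eq_edge:
  assumes "wf_graph H" "{a, b} \<in> edges H"
  shows "component_of H a = component_of H b"
  using component_of_eq[OF assms(1) reachable_edge[OF assms]] .

lemma component_of_eq_mem:
  assumes "wf_graph H" "b \<in> component_of H a"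
  shows "component_of H b = component_of H a"
  using assms component_of_eq[of H a b] unfolding component_of_def by simp

lemma component_eq_component_of:
  assumes "wf_graph H" "C \<in> components H" "b \<in> C"
  shows "C = component_of H b"
  using assms component_of_eq_mem[OF assms(1)] unfolding components_eq_image by blast

lemma components_subset_verts: "wf_graph H \<Longrightarrow> C \<in> components H \<Longrightarrow> C \<subseteq> verts H"
  unfolding components_eq_image by (auto dest: component_of_subset[of H])

lemma components_disjoint:
  assumes "wf_graph H" "C \<in> components H" "C' \<in> components H" "C \<noteq> C'"
  shows "C \<inter> C' = {}"
proof (rule ccontr)
  assume "C \<inter> C' \<noteq> {}"
  then obtain x where "x \<in> C" "x \<in> C'" by blast
  then show False
    using component_eq_component_of[OF assms(1) assms(2)] component_eq_component_of[OF assms(1) assms(3)]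
      assms(4) by metis
qed

lemma components_disjoint_Union_others:
  assumes "wf_graph H" "R \<subseteq> components H" "C \<in> R"
  shows "C \<inter> \<Union>(components H - R) = {}"
proof -
  have "C \<inter> C' = {}" if "C' \<in> components H - R" for C'
    using that components_disjoint[OF assms(1)] assms(2,3) by blast
  then show ?thesis by blast
qed

lemma component_of_edge_mem:
  assumes "wf_graph H" "{x, v} \<in> edges H" "v \<in> component_of H a"
  shows "x \<in> component_of H a"
proof -
  have "reachable H a v" using assms(3) unfolding component_of_def by simp
  moreover have "reachable H v x" by (rule reachable_sym[OF assms(1) reachable_edge[OF assms(1,2)]])
  ultimately show ?thesis unfolding component_of_def by (blast intro: reachable_trans)
qed

lemma component_of_mono:
  assumes "verts H \<subseteq> verts H'" "edges H \<subseteq> edges H'"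
  shows "component_of H a \<subseteq> component_of H' a"
  unfolding component_of_def using reachable_mono[OF _ assms] by blast

lemma components_del_verts_subset:
  assumes "wf_graph H" "C \<in> components (del_verts H X)" "c \<in> C"
  shows "C \<subseteq> component_of H c"
  using component_eq_component_of[OF wf_graph_del_verts[OF assms(1)] assms(2,3)]
    component_of_mono[of "del_verts H X" H c] by auto

lemma mem_Union_components:
  assumes "wf_graph H" "a \<in> \<Union>Q" "Q \<subseteq> components H"
  shows "component_of H a \<in> Q" "a \<in> component_of H a"
proof -
  obtain C where C: "C \<in> Q" "a \<in> C" using assms(2) by blast
  then have "C = component_of H a" using component_eq_component_of[OF assms(1)] assms(3) by blast
  with C show "component_of H a \<in> Q" "a \<in> component_of H a" by auto
qed

lemma edge_leaving_Union_components:
  assumes "wf_graph H" "Q \<subseteq> components (del_verts H X)" "{a, b} \<in> edges H"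
    and "a \<in> \<Union>Q" "b \<notin> \<Union>Q" "a \<notin> X"
  shows "b \<in> X"
proof (rule ccontr)
  have wfX: "wf_graph (del_verts H X)" by (rule wf_graph_del_verts[OF assms(1)])
  assume "b \<notin> X"
  then have "{a, b} \<in> edges (del_verts H X)" using assms(3,6) by auto
  then have "b \<in> component_of (del_verts H X) a"
    using reachable_edge[OF wfX] unfolding component_of_def by blast
  then show False using mem_Union_components[OF wfX assms(4,2)] assms(5) by blast
qed

lemma component_of_del_verts:
  assumes "wf_graph H" "component_of H u \<inter> W = {}"
  shows "component_of (del_verts H W) u = component_of H u"
proof
  show "component_of (del_verts H W) u \<subseteq> component_of H u"
    by (rule component_of_mono) auto
  show "component_of H u \<subseteq> component_of (del_verts H W) u"
  proof
    fix w assume "w \<in> component_of H u"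
    then have "(adj H)\<^sup>*\<^sup>* u w" "u \<in> verts H" unfolding component_of_def reachable_def by auto
    then have "(adj (del_verts H W))\<^sup>*\<^sup>* u w \<and> w \<in> component_of H u"
    proof induction
      case (step y z)
      then have z: "z \<in> component_of H u"
        using assms(1) unfolding component_of_def adj_def
        by (auto intro: reachable_trans reachable_edge)
      with step assms(2) have "adj (del_verts H W) y z" by (auto simp: adj_def)
      with step z show ?case by auto
    qed (simp add: component_of_self)
    moreover have "u \<notin> W" using assms(2) component_of_self[OF \<open>u \<in> verts H\<close>] by blast
    ultimately show "w \<in> component_of (del_verts H W) u"
      using \<open>u \<in> verts H\<close> unfolding component_of_def reachable_def by simp
  qed
qed

lemma components_del_verts_other_components:
  assumes "wf_graph H" "R \<subseteq> components H"
  shows "components (del_verts H (\<Union>(components H - R))) = R"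
proof -
  let ?W = "\<Union>(components H - R)"
  note disjoint = components_disjoint_Union_others[OF assms]
  have "component_of (del_verts H ?W) u \<in> R" if u: "u \<in> verts H - ?W" for u
  proof -
    have "component_of H u \<in> components H" "u \<in> component_of H u"
      using u component_of_self[of u H] unfolding components_eq_image by auto
    then have "component_of H u \<in> R" using u by blast
    then show ?thesis using component_of_del_verts[OF assms(1) disjoint] by simp
  qed
  then have "components (del_verts H ?W) \<subseteq> R"
    unfolding components_eq_image by auto
  moreover have "C \<in> components (del_verts H ?W)" if C: "C \<in> R" for C
  proof -
    obtain u where u: "u \<in> verts H" "C = component_of H u"
      using C assms(2) unfolding components_eq_image by blast
    then have "u \<notin> ?W" using disjoint[OF C] component_of_self[OF u(1)] by blast
    moreover have "C = component_of (del_verts H ?W) u"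
      using component_of_del_verts[OF assms(1) disjoint[OF C, unfolded u(2)]] u(2) by simp
    ultimately show ?thesis using u(1) unfolding components_eq_image by simp
  qed
  ultimately show ?thesis by (intro equalityI subsetI) auto
qed

lemma components_bound_mono:
  assumes "wf_graph H" "verts H' \<subseteq> verts H" "edges H' \<subseteq> edges H"
    and "\<forall>C\<in>components H. card (X \<inter> C) \<le> z"
  shows "\<forall>C\<in>components H'. card (X \<inter> C) \<le> z"
proof
  fix C assume "C \<in> components H'"
  then obtain u where u: "u \<in> verts H'" "C = component_of H' u"
    unfolding components_eq_image by blast
  have "finite (component_of H u)"
    by (rule finite_subset[OF component_of_subset[OF assms(1)] wf_graph_finite[OF assms(1)]])
  moreover have "X \<inter> C \<subseteq> X \<inter> component_of H u"
    using u(2) component_of_mono[OF assms(2,3), of u] by blast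
  ultimately have "card (X \<inter> C) \<le> card (X \<inter> component_of H u)"
    by (intro card_mono) auto
  moreover have "component_of H u \<in> components H"
    using u(1) assms(2) unfolding components_eq_image by blast
  ultimately show "card (X \<inter> C) \<le> z" using assms(4) by fastforce
qed

subsection \<open>Representatives of parity links\<close>

text \<open>If B properly colours D, then p says whether the x-x' walks through D that enter at a
  neighbour of x and leave at a neighbour of x' have odd length.\<close>
definition parity_link :: "'a graph \<Rightarrow> 'a set \<Rightarrow> 'a set \<Rightarrow> 'a \<Rightarrow> 'a \<Rightarrow> bool \<Rightarrow> bool" where
  "parity_link H B D x x' p \<longleftrightarrow>
     (\<exists>v\<in>D. \<exists>v'\<in>D. {x, v} \<in> edges H \<and> {x', v'} \<in> edges H \<and> ((v \<in> B) \<noteq> (v' \<in> B)) = p)"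

text \<open>Links with x = x' and p false are excluded: any single neighbour of x realises them.\<close>
definition links_represented :: "'a graph \<Rightarrow> 'a set \<Rightarrow> 'a set \<Rightarrow> nat \<Rightarrow> 'a set set \<Rightarrow> bool" where
  "links_represented H X B z R \<longleftrightarrow>
     (\<forall>D\<in>components (del_verts H X) - R. \<forall>x\<in>X. \<forall>x'\<in>X. \<forall>p.
        parity_link H B D x x' p \<longrightarrow> (x \<noteq> x' \<or> p) \<longrightarrow>
        (\<exists>T\<subseteq>R. card T = z \<and> (\<forall>D'\<in>T. parity_link H B D' x x' p)))"

lemma parity_link_sym: "parity_link H B D x x' p \<longleftrightarrow> parity_link H B D x' x p"
  unfolding parity_link_def by blast

lemma parity_link_reachable:
  assumes "wf_graph H" "D \<in> components (del_verts H X)" "parity_link H B D x x' p"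
  shows "reachable H x x'"
proof -
  obtain v v' where v: "v \<in> D" "v' \<in> D" "{x, v} \<in> edges H" "{x', v'} \<in> edges H"
    using assms(3) unfolding parity_link_def by blast
  have "reachable (del_verts H X) v v'"
    using component_eq_component_of[OF wf_graph_del_verts[OF assms(1)] assms(2) v(1)] v(2)
    unfolding component_of_def by simp
  then have "reachable H v v'" by (rule reachable_mono) auto
  moreover have "reachable H x v" "reachable H v' x'"
    using reachable_edge[OF assms(1)] reachable_sym[OF assms(1)] v(3,4) by blast+
  ultimately show ?thesis by (blast intro: reachable_trans)
qed

lemma card_reachable_pairs_le:
  assumes "wf_graph H" "finite X" "X \<subseteq> verts H"
    and "\<forall>C\<in>components H. card (X \<inter> C) \<le> z"
  shows "card {(y, y'). y \<in> X \<and> y' \<in> X \<and> reachable H y y'} \<le> z * card X"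
proof -
  have "{(y, y'). y \<in> X \<and> y' \<in> X \<and> reachable H y y'} = Sigma X (\<lambda>y. X \<inter> component_of H y)"
    unfolding component_of_def by auto
  also have "card \<dots> = (\<Sum>y\<in>X. card (X \<inter> component_of H y))"
    using assms(2) by simp
  also have "\<dots> \<le> (\<Sum>y\<in>X. z)"
  proof (rule sum_mono)
    fix y assume "y \<in> X"
    then have "component_of H y \<in> components H"
      using assms(3) unfolding components_eq_image by blast
    then show "card (X \<inter> component_of H y) \<le> z" using assms(4) by blast
  qed
  finally show ?thesis by (simp add: mult.commute)
qed

lemma obtain_capped_subsets:
  assumes "\<And>k. finite (A k)"
  obtains Sel where "\<And>k. Sel k \<subseteq> A k" "\<And>k. card (Sel k) \<le> z"
    "\<And>k. Sel k \<noteq> A k \<Longrightarrow> card (Sel k) = z"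
proof -
  have "\<exists>T. T \<subseteq> A k \<and> card T = min z (card (A k))" for k
    by (meson min.cobounded2 obtain_subset_with_card_n)
  then obtain Sel where Sel: "\<And>k. Sel k \<subseteq> A k" "\<And>k. card (Sel k) = min z (card (A k))"
    by metis
  moreover have "card (Sel k) = z" if "Sel k \<noteq> A k" for k
    using Sel[of k] that assms card_subset_eq by (metis min_def)
  ultimately show thesis using that[of Sel] by (simp add: Sel(2))
qed

lemma obtain_oriented_pair:
  assumes "inj_on idx X" "x \<in> X" "x' \<in> X" "x \<noteq> x' \<or> p"
  obtains y y' where "(y = x \<and> y' = x') \<or> (y = x' \<and> y' = x)" "p = (idx y \<le> (idx y' :: nat))"
proof (cases "x = x'")
  case False
  then have "idx x \<noteq> idx x'" using assms(1-3) by (meson inj_onD)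
  then have "p = (idx x \<le> idx x') \<or> p = (idx x' \<le> idx x)" by linarith
  then show thesis using that[of x x'] that[of x' x] by blast
qed (use assms(4) that in auto)

text \<open>Keys are ordered pairs (y, y') of terminals in a common component of H, each with the
  single parity idx y \<le> idx y' for an injective numbering idx of X. As the links (x, x', p) and
  (x', x, p) coincide, these keys cover every nontrivial link, and z components per key suffice.\<close>
lemma exists_links_representatives:
  assumes "wf_graph H" "finite X" "X \<subseteq> verts H"
    and "\<forall>C\<in>components H. card (X \<inter> C) \<le> z"
  shows "\<exists>R\<subseteq>components (del_verts H X). card R \<le> z\<^sup>2 * card X \<and> links_represented H X B z R"
proof -
  obtain idx :: "'a \<Rightarrow> nat" where idx: "inj_on idx X"
    using finite_imp_inj_to_nat_seg[OF assms(2)] by blast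
  define Keys where "Keys = {(y, y'). y \<in> X \<and> y' \<in> X \<and> reachable H y y'}"
  define Links where "Links k = {D \<in> components (del_verts H X).
      parity_link H B D (fst k) (snd k) (idx (fst k) \<le> idx (snd k))}" for k
  have "finite (components (del_verts H X))"
    using wf_graph_finite[OF assms(1)] unfolding components_eq_image by simp
  then have "finite (Links k)" for k unfolding Links_def by simp
  then obtain Sel where Sel: "\<And>k. Sel k \<subseteq> Links k" "\<And>k. card (Sel k) \<le> z"
    and Sel_full: "\<And>k. Sel k \<noteq> Links k \<Longrightarrow> card (Sel k) = z"
    by (rule obtain_capped_subsets[where A = Links and z = z]) blast
  define R where "R = (\<Union>k\<in>Keys. Sel k)"
  have "R \<subseteq> components (del_verts H X)"
    using Sel(1) unfolding R_def Links_def by blast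
  moreover have "card R \<le> z\<^sup>2 * card X"
  proof -
    have "Keys \<subseteq> X \<times> X" unfolding Keys_def by auto
    then have "finite Keys" using assms(2) finite_subset by blast
    then have "card R \<le> (\<Sum>k\<in>Keys. card (Sel k))"
      unfolding R_def by (rule card_UN_le)
    also have "\<dots> \<le> z * card Keys"
      using sum_bounded_above[of Keys "\<lambda>k. card (Sel k)" z] Sel(2) by (simp add: mult.commute)
    also have "\<dots> \<le> z * (z * card X)"
      using card_reachable_pairs_le[OF assms] unfolding Keys_def by simp
    finally show ?thesis by (simp add: power2_eq_square)
  qed
  moreover have "links_represented H X B z R"
    unfolding links_represented_def
  proof (intro ballI allI impI)
    fix D x x' p
    assume D: "D \<in> components (del_verts H X) - R" and x: "x \<in> X" "x' \<in> X"
      and link: "parity_link H B D x x' p" and nontrivial: "x \<noteq> x' \<or> p"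
    obtain y y' where yy: "(y = x \<and> y' = x') \<or> (y = x' \<and> y' = x)" "p = (idx y \<le> idx y')"
      using obtain_oriented_pair[OF idx x nontrivial] by metis
    then have same_link: "parity_link H B D' y y' p \<longleftrightarrow> parity_link H B D' x x' p" for D'
      using parity_link_sym[of H B D' x x' p] by auto
    let ?k = "(y, y')"
    have link_k: "D' \<in> Links ?k \<longleftrightarrow> D' \<in> components (del_verts H X) \<and> parity_link H B D' x x' p"
      for D'
      unfolding Links_def using same_link yy(2) by simp
    have "reachable H y y'"
      using parity_link_reachable[OF assms(1) _ link] reachable_sym[OF assms(1)] D yy by blast
    then have "?k \<in> Keys" using x yy unfolding Keys_def by auto
    then have "Sel ?k \<subseteq> R" unfolding R_def by blast
    moreover have "D \<in> Links ?k" using D link link_k by blast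
    ultimately have "card (Sel ?k) = z" using D Sel_full by blast
    then show "\<exists>T\<subseteq>R. card T = z \<and> (\<forall>D'\<in>T. parity_link H B D' x x' p)"
      using \<open>Sel ?k \<subseteq> R\<close> Sel(1)[of ?k] link_k by blast
  qed
  ultimately show ?thesis by blast
qed

subsection \<open>Deleting unrepresented components keeps the odd cycle transversal number\<close>

lemma card_Int_Union_components:
  assumes "wf_graph H" "Q \<subseteq> components H"
  shows "card (Y \<inter> \<Union>Q) = (\<Sum>C\<in>Q. card (Y \<inter> C))"
proof -
  have fin: "finite (components H)" "\<And>C. C \<in> components H \<Longrightarrow> finite C"
    using wf_graph_finite[OF assms(1)]
      finite_subset[OF component_of_subset[OF assms(1)] wf_graph_finite[OF assms(1)]]
    unfolding components_eq_image by auto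
  have "card (\<Union>C\<in>Q. Y \<inter> C) = (\<Sum>C\<in>Q. card (Y \<inter> C))"
  proof (rule card_UN_disjoint)
    show "finite Q" using fin(1) assms(2) finite_subset by blast
    show "\<forall>C\<in>Q. finite (Y \<inter> C)" using fin(2) assms(2) by blast
    show "\<forall>C\<in>Q. \<forall>C'\<in>Q. C \<noteq> C' \<longrightarrow> (Y \<inter> C) \<inter> (Y \<inter> C') = {}"
    proof (intro ballI impI)
      fix C C' assume "C \<in> Q" "C' \<in> Q" "C \<noteq> C'"
      then have "C \<inter> C' = {}" using components_disjoint[OF assms(1)] assms(2) by blast
      then show "(Y \<inter> C) \<inter> (Y \<inter> C') = {}" by blast
    qed
  qed
  then show ?thesis unfolding Int_Union .
qed

lemma card_smaller_per_component_le:
  assumes "wf_graph H" "S \<subseteq> verts H" "X \<subseteq> verts H"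
  defines "P \<equiv> {v. card (S \<inter> component_of H v) < card (X \<inter> component_of H v)}"
  shows "card ((S \<inter> P) \<union> (X - P)) \<le> card S"
proof -
  define Bad where "Bad = {C \<in> components H. \<not> card (S \<inter> C) < card (X \<inter> C)}"
  have minus_P: "Y - P = Y \<inter> \<Union>Bad" if "Y \<subseteq> verts H" for Y
  proof -
    have "v \<notin> P \<longleftrightarrow> v \<in> \<Union>Bad" if v: "v \<in> verts H" for v
    proof
      have "component_of H v \<in> components H"
        using v unfolding components_eq_image by blast
      moreover assume "v \<notin> P"
      ultimately have "component_of H v \<in> Bad" unfolding P_def Bad_def by simp
      then show "v \<in> \<Union>Bad" using component_of_self[OF v] by blast
    next
      assume "v \<in> \<Union>Bad"
      then obtain C where C: "C \<in> Bad" "v \<in> C" by blast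
      then have "C = component_of H v"
        using component_eq_component_of[OF assms(1)] unfolding Bad_def by blast
      then show "v \<notin> P" using C(1) unfolding P_def Bad_def by simp
    qed
    then show ?thesis using \<open>Y \<subseteq> verts H\<close> by blast
  qed
  have Bad: "Bad \<subseteq> components H" unfolding Bad_def by blast
  have fin: "finite (verts H)" by (rule wf_graph_finite[OF assms(1)])
  have "card ((S \<inter> P) \<union> (X - P)) \<le> card (S \<inter> P) + card (X - P)"
    by (rule card_Un_le)
  also have "card (X - P) \<le> card (S - P)"
  proof -
    have "card (X - P) = (\<Sum>C\<in>Bad. card (X \<inter> C))"
      using minus_P[OF assms(3)] card_Int_Union_components[OF assms(1) Bad] by simp
    also have "\<dots> \<le> (\<Sum>C\<in>Bad. card (S \<inter> C))"
      by (rule sum_mono) (simp add: Bad_def)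
    also have "\<dots> = card (S - P)"
      using minus_P[OF assms(2)] card_Int_Union_components[OF assms(1) Bad] by simp
    finally show ?thesis .
  qed
  also have "card (S \<inter> P) + card (S - P) = card S"
    using card_Int_Diff[of S P] assms(2) fin finite_subset by metis
  finally show ?thesis by simp
qed

lemma exists_component_avoiding:
  assumes "wf_graph H" "T \<subseteq> components H" "\<forall>D\<in>T. D \<subseteq> K"
    and "finite S" "card (S \<inter> K) < card T"
  shows "\<exists>D\<in>T. D \<inter> S = {}"
proof (rule ccontr)
  assume meets: "\<not> (\<exists>D\<in>T. D \<inter> S = {})"
  have "card T \<le> card (S \<inter> K)"
  proof (rule card_le_if_inj_on_rel[where r = "\<lambda>D s. s \<in> D"])
    show "finite (S \<inter> K)" using assms(4) by simp
    show "\<exists>s. s \<in> S \<inter> K \<and> s \<in> D" if "D \<in> T" for D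
      using meets that assms(3) by blast
    show "D1 = D2" if "D1 \<in> T" "D2 \<in> T" "s \<in> D1" "s \<in> D2" for D1 D2 s
      using components_disjoint[OF assms(1)] assms(2) that by blast
  qed
  then show False using assms(5) by simp
qed

text \<open>Along D, which avoids W, the colourings A and B agree up to a global flip.\<close>
lemma parity_link_forces_colours:
  assumes "wf_graph H" "proper_colouring (del_verts H X) B" "proper_colouring (del_verts H W) A"
    and "D \<in> components (del_verts H X)" "D \<inter> W = {}" "x \<notin> W" "x' \<notin> W"
    and "parity_link H B D x x' p"
  shows "((x \<in> A) \<noteq> (x' \<in> A)) = p"
proof -
  obtain v v' where v: "v \<in> D" "v' \<in> D" "{x, v} \<in> edges H" "{x', v'} \<in> edges H"
    and p: "((v \<in> B) \<noteq> (v' \<in> B)) = p"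
    using assms(8) unfolding parity_link_def by blast
  have wfX: "wf_graph (del_verts H X)" by (rule wf_graph_del_verts[OF assms(1)])
  have D: "D = component_of (del_verts H X) v"
    by (rule component_eq_component_of[OF wfX assms(4) v(1)])
  then have "component_of (del_verts (del_verts H X) W) v = D"
    using component_of_del_verts[OF wfX] assms(5) by simp
  then have "reachable (del_verts H (X \<union> W)) v v'"
    using v(2) unfolding component_of_def del_verts_del_verts by blast
  moreover have "proper_colouring (del_verts H (X \<union> W)) A" "proper_colouring (del_verts H (X \<union> W)) B"
    using proper_colouring_del_verts_mono assms(2,3) by blast+
  ultimately have "((v' \<in> A) = (v' \<in> B)) = ((v \<in> A) = (v \<in> B))"
    by (intro proper_colourings_reachable)
  moreover have "(x \<in> A) \<noteq> (v \<in> A)" "(x' \<in> A) \<noteq> (v' \<in> A)"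
    using v assms(5-7) proper_colouringD[OF assms(3)] by auto
  ultimately show ?thesis using p by blast
qed

text \<open>Inside a component of H on which S is smaller than z, the edges between X - S and a
  deleted component D all relate A and B in the same way: two edges relating them differently
  would form a nontrivial link, realised by z kept components, one of which avoids S and
  forces the opposite parity.\<close>
lemma exists_consistent_flip:
  assumes "wf_graph H" "finite S"
    and "proper_colouring (del_verts H X) B" "proper_colouring (del_verts H (Dr \<union> S)) A"
    and "links_represented H X B z R" "R \<subseteq> components (del_verts H X)"
    and "\<forall>D'\<in>R. D' \<inter> Dr = {}" "X \<inter> Dr = {}"
    and "D \<in> components (del_verts H X) - R" "a \<in> D" "card (S \<inter> component_of H a) < z"
  shows "\<exists>t. \<forall>x\<in>X - S. \<forall>v\<in>D. {x, v} \<in> edges H \<longrightarrow> t = ((x \<in> A) = (v \<in> B))"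
proof (rule ccontr)
  let ?K = "component_of H a"
  have in_K: "C \<subseteq> ?K" if "C \<in> components (del_verts H X)" "c \<in> C" "c \<in> ?K" for C c
    using components_del_verts_subset[OF assms(1) that(1,2)] component_of_eq_mem[OF assms(1) that(3)]
    by simp
  have D_K: "D \<subseteq> ?K" using components_del_verts_subset[OF assms(1) _ assms(10)] assms(9) by blast
  assume "\<nexists>t. \<forall>x\<in>X - S. \<forall>v\<in>D. {x, v} \<in> edges H \<longrightarrow> t = ((x \<in> A) = (v \<in> B))"
  then obtain x1 v1 x2 v2 where
    e: "x1 \<in> X - S" "v1 \<in> D" "{x1, v1} \<in> edges H" "x2 \<in> X - S" "v2 \<in> D" "{x2, v2} \<in> edges H"
    and conflict: "((x1 \<in> A) = (v1 \<in> B)) \<noteq> ((x2 \<in> A) = (v2 \<in> B))"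
    by (metis (full_types))
  define p where "p = ((v1 \<in> B) \<noteq> (v2 \<in> B))"
  have "parity_link H B D x1 x2 p" unfolding parity_link_def p_def using e by blast
  moreover have "x1 \<noteq> x2 \<or> p" using conflict unfolding p_def by blast
  ultimately obtain T where T: "T \<subseteq> R" "card T = z" "\<forall>D'\<in>T. parity_link H B D' x1 x2 p"
    using assms(5,9) e(1,4) unfolding links_represented_def by blast
  have x1_K: "x1 \<in> ?K"
    using component_of_edge_mem[OF assms(1) e(3)] e(2) D_K by blast
  have "\<forall>D'\<in>T. D' \<subseteq> ?K"
  proof
    fix D' assume D': "D' \<in> T"
    then obtain w where w: "w \<in> D'" "{x1, w} \<in> edges H"
      using T(3) unfolding parity_link_def by blast
    have "w \<in> ?K"
      using component_of_edge_mem[OF assms(1) _ x1_K] w(2) by (simp add: insert_commute)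
    then show "D' \<subseteq> ?K" using in_K T(1) assms(6) D' w(1) by blast
  qed
  moreover have "T \<subseteq> components (del_verts H X)" using T(1) assms(6) by blast
  ultimately have "\<exists>D'\<in>T. D' \<inter> S = {}"
    using exists_component_avoiding[OF wf_graph_del_verts[OF assms(1)] _ _ assms(2)] T(2) assms(11)
    by simp
  then obtain D' where D': "D' \<in> T" "D' \<inter> S = {}" by blast
  have "((x1 \<in> A) \<noteq> (x2 \<in> A)) = p"
  proof (rule parity_link_forces_colours[OF assms(1,3,4)])
    show "D' \<in> components (del_verts H X)" using D' T(1) assms(6) by blast
    show "D' \<inter> (Dr \<union> S) = {}" using D' T(1) assms(7) by blast
    show "x1 \<notin> Dr \<union> S" "x2 \<notin> Dr \<union> S" using e(1,4) assms(8) by blast+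
    show "parity_link H B D' x1 x2 p" using T(3) D'(1) by blast
  qed
  then show False using conflict unfolding p_def by blast
qed

lemma proper_colouring_flip_deleted:
  assumes "wf_graph H" "proper_colouring (del_verts H X) B" "proper_colouring (del_verts H (Dr \<union> S)) A"
    and "X \<inter> Dr = {}" "Dr = \<Union>Q" "Q \<subseteq> components (del_verts H X)"
    and "\<forall>a\<in>Dr \<inter> P. \<forall>x\<in>X - S. {x, a} \<in> edges H \<longrightarrow>
           f (component_of (del_verts H X) a) = ((x \<in> A) = (a \<in> B))"
  shows "proper_colouring (del_verts H (S \<union> - P))
           {v. if v \<in> Dr then (v \<in> B) \<noteq> f (component_of (del_verts H X) v) else v \<in> A}"
    (is "proper_colouring _ ?A")
proof -
  let ?HX = "del_verts H X"
  have wfX: "wf_graph ?HX" by (rule wf_graph_del_verts[OF assms(1)])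
  have mixed: "(a \<in> ?A) \<noteq> (b \<in> ?A)"
    if ab: "{a, b} \<in> edges H" "a \<in> Dr \<inter> P" "b \<notin> Dr" "b \<notin> S" for a b
  proof -
    have "b \<in> X"
      using edge_leaving_Union_components[OF assms(1) assms(6) ab(1)] ab(2,3) assms(4,5) by blast
    then have "f (component_of ?HX a) = ((b \<in> A) = (a \<in> B))"
      using assms(7) ab by (simp add: insert_commute)
    then show ?thesis using ab(2,3) by auto
  qed
  show ?thesis
    unfolding proper_colouring_def
  proof (intro allI impI)
    fix a b assume "{a, b} \<in> edges (del_verts H (S \<union> - P))"
    then have ab: "{a, b} \<in> edges H" "a \<notin> S" "b \<notin> S" "a \<in> P" "b \<in> P" by auto
    consider "a \<in> Dr" "b \<in> Dr" | "a \<in> Dr" "b \<notin> Dr" | "a \<notin> Dr" "b \<in> Dr" | "a \<notin> Dr" "b \<notin> Dr"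
      by blast
    then show "(a \<in> ?A) \<noteq> (b \<in> ?A)"
    proof cases
      case 1
      then have "{a, b} \<in> edges ?HX" using ab(1) assms(4) by auto
      then have "component_of ?HX a = component_of ?HX b" "(a \<in> B) \<noteq> (b \<in> B)"
        using component_of_eq_edge[OF wfX] proper_colouringD[OF assms(2)] by blast+
      with 1 show ?thesis by auto
    next
      case 2
      then show ?thesis using mixed ab by blast
    next
      case 3
      then have "(b \<in> ?A) \<noteq> (a \<in> ?A)" using mixed[of b a] ab by (simp add: insert_commute)
      then show ?thesis by blast
    next
      case 4
      then have "(a \<in> A) \<noteq> (b \<in> A)" using ab proper_colouringD[OF assms(3)] by auto
      with 4 show ?thesis by auto
    qed
  qed
qed

lemma exists_proper_colouring_flip_deleted:
  assumes "wf_graph H" "finite S"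
    and "proper_colouring (del_verts H X) B" "proper_colouring (del_verts H (Dr \<union> S)) A"
    and "links_represented H X B z R" "R \<subseteq> components (del_verts H X)"
    and "Dr = \<Union>(components (del_verts H X) - R)"
    and "\<forall>a\<in>Dr \<inter> P. card (S \<inter> component_of H a) < z"
  shows "\<exists>A'. proper_colouring (del_verts H (S \<union> - P)) A'"
proof -
  let ?HX = "del_verts H X"
  have wfX: "wf_graph ?HX" by (rule wf_graph_del_verts[OF assms(1)])
  have Dr: "component_of ?HX a \<in> components ?HX - R" "a \<in> component_of ?HX a" if "a \<in> Dr" for a
    using mem_Union_components[OF wfX, of a "components ?HX - R"] that assms(7) by auto
  have X_Dr: "X \<inter> Dr = {}"
    using components_subset_verts[OF wfX] assms(7) by auto
  have R_Dr: "\<forall>D'\<in>R. D' \<inter> Dr = {}"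
    using components_disjoint_Union_others[OF wfX assms(6)] assms(7) by blast
  define f where "f D = (SOME t. \<forall>x\<in>X - S. \<forall>v\<in>D. {x, v} \<in> edges H \<longrightarrow> t = ((x \<in> A) = (v \<in> B)))"
    for D
  have "\<forall>a\<in>Dr \<inter> P. \<forall>x\<in>X - S. {x, a} \<in> edges H \<longrightarrow> f (component_of ?HX a) = ((x \<in> A) = (a \<in> B))"
  proof (intro ballI impI)
    fix a x assume a: "a \<in> Dr \<inter> P" and x: "x \<in> X - S" "{x, a} \<in> edges H"
    then have aDr: "a \<in> Dr" by blast
    have "\<exists>t. \<forall>x\<in>X - S. \<forall>v\<in>component_of ?HX a. {x, v} \<in> edges H \<longrightarrow> t = ((x \<in> A) = (v \<in> B))"
      by (rule exists_consistent_flip[OF assms(1-6) R_Dr X_Dr Dr[OF aDr]]) (use a assms(8) in blast)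
    then have "\<forall>x\<in>X - S. \<forall>v\<in>component_of ?HX a. {x, v} \<in> edges H \<longrightarrow>
        f (component_of ?HX a) = ((x \<in> A) = (v \<in> B))"
      unfolding f_def by (rule someI_ex)
    then show "f (component_of ?HX a) = ((x \<in> A) = (a \<in> B))"
      using x Dr(2)[OF aDr] by blast
  qed
  then show ?thesis
    using proper_colouring_flip_deleted[OF assms(1,3,4) X_Dr assms(7)] by blast
qed

text \<open>Given a small transversal S of H - Dr, keep S on the components K of H with
  |S \<inter> K| < |X \<inter> K| \<le> z, and take X elsewhere. On the first kind of components the kept links
  make the flips of the deleted components consistent, so the result is a transversal of H of
  size at most |S|.\<close>
lemma oct_del_unrepresented_ge:
  assumes "wf_graph H" "X \<subseteq> verts H" "oct H = card X"
    and "\<forall>C\<in>components H. card (X \<inter> C) \<le> z"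
    and "proper_colouring (del_verts H X) B"
    and "R \<subseteq> components (del_verts H X)" "links_represented H X B z R"
  shows "card X \<le> oct (del_verts H (\<Union>(components (del_verts H X) - R)))"
proof (rule ccontr)
  define Dr where "Dr = \<Union>(components (del_verts H X) - R)"
  assume "\<not> card X \<le> oct (del_verts H Dr)"
  then have lt: "oct (del_verts H Dr) < card X" by simp
  obtain S where S: "S \<subseteq> verts (del_verts H Dr)" "bipartite (del_verts (del_verts H Dr) S)"
    "card S = oct (del_verts H Dr)"
    using obtain_oct_set[OF wf_graph_del_verts[OF assms(1)]] by blast
  have SH: "S \<subseteq> verts H" and finS: "finite S"
    using S(1) finite_subset[OF _ wf_graph_finite[OF assms(1)]] by auto
  obtain A where A: "proper_colouring (del_verts H (Dr \<union> S)) A"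
    using S(2) bipartite_del_verts_iff[OF wf_graph_del_verts[OF assms(1)]]
    unfolding del_verts_del_verts by blast
  define P where "P = {v. card (S \<inter> component_of H v) < card (X \<inter> component_of H v)}"
  have "\<forall>a\<in>Dr \<inter> P. card (S \<inter> component_of H a) < z"
  proof
    fix a assume a: "a \<in> Dr \<inter> P"
    then have "a \<in> verts H" using Dr_def components_subset_verts[OF wf_graph_del_verts[OF assms(1)]] by auto
    then have "component_of H a \<in> components H" unfolding components_eq_image by simp
    then show "card (S \<inter> component_of H a) < z" using a assms(4) unfolding P_def by fastforce
  qed
  then obtain A' where "proper_colouring (del_verts H (S \<union> - P)) A'"
    using exists_proper_colouring_flip_deleted[OF assms(1) finS assms(5) A assms(7,6) Dr_def] by blast
  moreover have "proper_colouring (del_verts H (X \<union> P)) B"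
    using proper_colouring_del_verts_mono[OF assms(5)] by blast
  moreover have "a \<in> P \<longleftrightarrow> b \<in> P" if "{a, b} \<in> edges H" for a b
    using component_of_eq_edge[OF assms(1) that] unfolding P_def by simp
  ultimately have "proper_colouring (del_verts H ((S \<inter> P) \<union> (X - P))) (A' \<inter> P \<union> (B - P))"
    by (intro proper_colouring_merge)
  then have "bipartite (del_verts H ((S \<inter> P) \<union> (X - P)))"
    using bipartite_del_verts_iff[OF assms(1)] by blast
  moreover have "(S \<inter> P) \<union> (X - P) \<subseteq> verts H" using SH assms(2) by blast
  ultimately have "oct H \<le> card ((S \<inter> P) \<union> (X - P))"
    using oct_le finite_subset[OF _ wf_graph_finite[OF assms(1)]] by blast
  also have "\<dots> \<le> card S"
    unfolding P_def by (rule card_smaller_per_component_le[OF assms(1) SH assms(2)])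
  finally show False using S(3) lt assms(3) by simp
qed

lemma subgraph_del_verts: "wf_graph H \<Longrightarrow> subgraph (del_verts H S) H"
  unfolding subgraph_def using wf_graph_del_verts by auto

lemma certificate_del_unrepresented:
  assumes "certificate G X z H" "finite X" "proper_colouring (del_verts H X) B"
    and "R \<subseteq> components (del_verts H X)" "links_represented H X B z R"
  shows "certificate G X z (del_verts H (\<Union>(components (del_verts H X) - R)))"
proof -
  define H' where "H' = del_verts H (\<Union>(components (del_verts H X) - R))"
  have sub: "subgraph H G" and bip: "bipartite (del_verts H X)" and oct: "oct H = card X"
    and bound: "\<forall>C\<in>components H. card (X \<inter> C) \<le> z"
    using assms(1) unfolding certificate_def by auto
  have wf: "wf_graph H" using sub unfolding subgraph_def by simp
  have X: "X \<subseteq> verts H" by (rule oct_set_subset_verts[OF wf assms(2) bip oct])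
  then have "X \<subseteq> verts H'"
    using components_subset_verts[OF wf_graph_del_verts[OF wf]] unfolding H'_def by auto
  moreover have bip': "bipartite (del_verts H' X)"
    using bipartite_del_verts_iff[OF wf_graph_del_verts[OF wf]] proper_colouring_del_verts_mono[OF assms(3)]
    unfolding H'_def del_verts_del_verts by blast
  ultimately have "oct H' \<le> card X" by (rule oct_le[OF assms(2)])
  moreover have "card X \<le> oct H'"
    unfolding H'_def by (rule oct_del_unrepresented_ge[OF wf X oct bound assms(3-5)])
  moreover have "subgraph H' G"
    using subgraph_del_verts[OF wf] sub unfolding H'_def subgraph_def by auto
  ultimately show ?thesis
    using bip' components_bound_mono[OF wf _ _ bound, of H']
    unfolding certificate_def H'_def subgraph_def by auto
qed

theorem mainTheorem6:
  fixes G H :: "'a graph" and XC :: "'a set" and z :: nat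
  assumes "wf_graph G"
    and "XC \<subseteq> verts G"
    and "certificate G XC z H"
  shows "\<exists>H'. subgraph H' H \<and> certificate G XC z H' \<and>
           card (components (del_verts H' XC)) \<le> z^2 * card XC"
proof -
  have wf: "wf_graph H" and bip: "bipartite (del_verts H XC)" and oct: "oct H = card XC"
    and bound: "\<forall>C\<in>components H. card (XC \<inter> C) \<le> z"
    using assms(3) unfolding certificate_def subgraph_def by auto
  have fin: "finite XC" using assms(1,2) finite_subset wf_graph_finite by blast
  obtain B where B: "proper_colouring (del_verts H XC) B"
    using bip bipartite_del_verts_iff[OF wf] by blast
  obtain R where R: "R \<subseteq> components (del_verts H XC)" "card R \<le> z\<^sup>2 * card XC"
    "links_represented H XC B z R"
    using exists_links_representatives[OF wf fin oct_set_subset_verts[OF wf fin bip oct] bound]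
    by blast
  let ?H' = "del_verts H (\<Union>(components (del_verts H XC) - R))"
  have "components (del_verts ?H' XC) = R"
    by (subst del_verts_commute)
      (rule components_del_verts_other_components[OF wf_graph_del_verts[OF wf] R(1)])
  then show ?thesis
    using subgraph_del_verts[OF wf] certificate_del_unrepresented[OF assms(3) fin B R(1,3)] R(2)
    by (intro exI[of _ ?H']) simp
qed

end
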